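(* Let $x \in \mathbb{Z}$ and let $m \in \mathbb{N}$ be odd with $m \geq 3$. Suppose $\left\lfloor \frac{x^2+7}{4} \right\rfloor = 2^m$. Then, in the ring of integers $\mathcal{O}_K$ of $K = \mathbb{Q}(\sqrt{-7})$, we have $1 - 2\theta = \theta^m - \theta'^m$, where $\theta = \frac{1+\sqrt{-7}}{2}$ and $\theta' = 1-\theta = \frac{1-\sqrt{-7}}{2}$ (equivalently, $-\sqrt{-7} = \theta^m - \theta'^m$).
   Context: $K = \mathbb{Q}(\sqrt{-7})$ with a fixed square root $\sqrt{-7}$; $\theta = \frac{1+\sqrt{-7}}{2}$ is the root of $X^2 - X + 2$, which lies in $\mathcal{O}_K$, and $\theta' = 1 - \theta$. The quotient $\lfloor\cdot\rfloor$ denotes integer (floor) division, as in the formal statement. *)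

theory Defs
  imports Complex_Main
begin

text \<open>We work inside the complex numbers, into which O_K embeds (K = Q(sqrt(-7))),
  with the fixed square root sqrt(-7) = i * sqrt 7.\<close>

definition sqrt_m7 :: complex where
  "sqrt_m7 = \<i> * complex_of_real (sqrt 7)"

definition theta :: complex where
  "theta = (1 + sqrt_m7) / 2"

definition theta' :: complex where
  "theta' = 1 - theta"

end

theory Submission
  imports Defs
begin

text \<open>Since 2 = \<theta>\<theta>' splits in \<open>\<int>[\<theta>]\<close>, an element of norm \<open>2^m\<close> that is not divisible
  by 2 is divisible by exactly one of \<theta>, \<theta>'; peeling these factors off one at a time shows that
  it is \<open>\<plusminus>\<theta>^m\<close> or \<open>\<plusminus>\<theta>'^m\<close>. The hypothesis forces x = 2u + 1 with u + \<theta> of norm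
  \<open>u^2 + u + 2 = 2^m\<close>, so comparing imaginary parts gives \<open>\<theta>^m - \<theta>'^m = \<plusminus>(\<theta> - \<theta>')\<close>.
  The quotient \<open>(\<theta>^m - \<theta>'^m) / (\<theta> - \<theta>')\<close> is the Lucas sequence \<open>U\<^sub>m(1, 2)\<close>, which is
  \<open>3 mod 4\<close> for odd m \<open>\<ge>\<close> 3; hence the sign is negative.\<close>

lemma sqrt_m7_squared: "sqrt_m7^2 = -7"
  by (simp add: sqrt_m7_def power_mult_distrib flip: of_real_power)

lemma theta'_eq: "theta' = (1 - sqrt_m7) / 2"
  by (simp add: theta'_def theta_def field_simps)

lemma theta_squared: "theta^2 = theta - 2"
  using sqrt_m7_squared by (simp add: theta_def power2_eq_square field_simps)

lemma theta'_squared: "theta'^2 = theta' - 2"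
  using sqrt_m7_squared by (simp add: theta'_eq power2_eq_square field_simps)

lemma theta_mult_theta': "theta * theta' = 2"
  using sqrt_m7_squared by (simp add: theta'_eq theta_def power2_eq_square field_simps)

lemma Re_theta: "Re theta = 1 / 2" and Im_theta: "Im theta = sqrt 7 / 2"
  by (simp_all add: theta_def sqrt_m7_def)

lemma cnj_theta: "cnj theta = theta'"
  by (simp add: theta_def theta'_eq sqrt_m7_def)

lemma cnj_theta': "cnj theta' = theta"
  by (simp flip: cnj_theta)

lemma theta_neq_theta': "theta \<noteq> theta'"
proof
  assume "theta = theta'"
  then have "Im theta = Im theta'" by simp
  then show False by (simp add: theta'_def Im_theta)
qed

definition ztheta :: "int \<Rightarrow> int \<Rightarrow> complex" where
  "ztheta a b = of_int a + of_int b * theta"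

definition theta_norm :: "int \<Rightarrow> int \<Rightarrow> int" where
  "theta_norm a b = a^2 + a * b + 2 * b^2"

lemma ztheta_eq_iff: "ztheta a b = ztheta c d \<longleftrightarrow> a = c \<and> b = d"
proof
  assume eq: "ztheta a b = ztheta c d"
  have "b = d"
    using arg_cong[OF eq, of Im] by (simp add: ztheta_def Im_theta)
  then show "a = c \<and> b = d"
    using arg_cong[OF eq, of Re] by (simp add: ztheta_def Re_theta)
qed simp

lemma uminus_ztheta: "- ztheta a b = ztheta (- a) (- b)"
  by (simp add: ztheta_def)

lemma cnj_ztheta: "cnj (ztheta a b) = ztheta (a + b) (- b)"
  by (simp add: ztheta_def cnj_theta theta'_def algebra_simps)

lemma theta_mult_ztheta: "theta * ztheta a b = ztheta (- 2 * b) (a + b)"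
proof -
  have "theta * ztheta a b = of_int a * theta + of_int b * theta^2"
    by (simp add: ztheta_def algebra_simps power2_eq_square)
  then show ?thesis
    by (simp add: theta_squared ztheta_def algebra_simps)
qed

lemma theta_norm_cnj: "theta_norm (a + b) (- b) = theta_norm a b"
  by (simp add: theta_norm_def power2_eq_square algebra_simps)

lemma theta_norm_theta_mult: "theta_norm (- 2 * b) (a + b) = 2 * theta_norm a b"
  by (simp add: theta_norm_def power2_eq_square algebra_simps)

lemma theta_power_ztheta: "\<exists>a b. theta^k = ztheta a b"
proof (induction k)
  case 0
  have "theta^0 = ztheta 1 0" by (simp add: ztheta_def)
  then show ?case by blast
next
  case (Suc k)
  then show ?case by (metis power_Suc theta_mult_ztheta)
qed

lemma theta'_power_ztheta: "\<exists>a b. theta'^k = ztheta a b"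
proof -
  obtain a b where "theta^k = ztheta a b"
    using theta_power_ztheta by blast
  then have "cnj (theta^k) = cnj (ztheta a b)" by simp
  then have "theta'^k = ztheta (a + b) (- b)"
    by (simp add: cnj_theta cnj_ztheta)
  then show ?thesis by blast
qed

lemma theta_mult_theta'_power: "\<exists>a b. theta * theta'^Suc k = ztheta (2 * a) (2 * b)"
proof -
  obtain a b where "theta'^k = ztheta a b"
    using theta'_power_ztheta by blast
  have "theta * theta'^Suc k = (theta * theta') * theta'^k" by simp
  also have "\<dots> = ztheta (2 * a) (2 * b)"
    by (simp add: theta_mult_theta' \<open>theta'^k = ztheta a b\<close> ztheta_def algebra_simps)
  finally have "theta * theta'^Suc k = ztheta (2 * a) (2 * b)" .
  then show ?thesis by blast
qed

definition theta_power_associates :: "nat \<Rightarrow> complex set" where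
  "theta_power_associates m = {theta^m, - (theta^m), theta'^m, - (theta'^m)}"

lemma cnj_theta_power_associates:
  "z \<in> theta_power_associates m \<Longrightarrow> cnj z \<in> theta_power_associates m"
  by (auto simp: theta_power_associates_def cnj_theta cnj_theta')

lemma primitive_norm_step:
  assumes IH: "\<And>p q. theta_norm p q = 2^m \<Longrightarrow> odd p \<or> odd q \<Longrightarrow>
                  ztheta p q \<in> theta_power_associates m"
    and norm: "theta_norm u v = 2^Suc m" and primitive: "odd u \<or> odd v" and "even u"
  shows "ztheta u v \<in> theta_power_associates (Suc m)"
proof -
  obtain k where k: "u = 2 * k" using \<open>even u\<close> by blast
  have factor: "ztheta u v = theta * ztheta (v + k) (- k)"
    by (simp add: theta_mult_ztheta k)
  have "theta_norm (v + k) (- k) = 2^m"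
    using norm theta_norm_theta_mult[of "- k" "v + k"] by (simp add: k)
  moreover have "odd (v + k) \<or> odd (- k)"
    using primitive k by auto
  ultimately have IH': "ztheta (v + k) (- k) \<in> theta_power_associates m"
    using IH by blast
  show ?thesis
  proof (cases m)
    case 0
    then show ?thesis
      using IH' factor by (auto simp: theta_power_associates_def theta'_def)
  next
    case (Suc n)
    obtain a b where ab: "theta * theta'^m = ztheta (2 * a) (2 * b)"
      using theta_mult_theta'_power Suc by blast
    have "ztheta u v \<noteq> ztheta (2 * a) (2 * b)" "ztheta u v \<noteq> - ztheta (2 * a) (2 * b)"
      using primitive by (auto simp: ztheta_eq_iff uminus_ztheta)
    then show ?thesis
      using IH' factor ab by (auto simp: theta_power_associates_def)
  qed
qed

lemma primitive_norm_power_of_two: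
  assumes "theta_norm u v = 2^m" and "odd u \<or> odd v"
  shows "ztheta u v \<in> theta_power_associates m"
  using assms
proof (induction m arbitrary: u v)
  case 0
  then have "(2 * u + v)^2 + 7 * v^2 = 4"
    by (simp add: theta_norm_def power2_eq_square algebra_simps)
  then have "v = 0"
    by (smt (verit) zero_le_power2 power2_less_eq_zero_iff)
  then have "u = 1 \<or> u = -1"
    using "0.prems"(1) by (simp add: theta_norm_def power2_eq_1_iff)
  then show ?case
    using \<open>v = 0\<close> by (auto simp: theta_power_associates_def ztheta_def)
next
  case (Suc m)
  have "even (theta_norm u v)"
    using Suc.prems(1) by simp
  then have "even u \<or> even (u + v)"
    by (auto simp: theta_norm_def even_add even_mult_iff)
  then show ?case
  proof
    assume "even u"
    then show ?thesis using primitive_norm_step Suc by blast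
  next
    assume "even (u + v)"
    \<comment> \<open>then \<theta>' divides u + v\<theta>, i.e. \<theta> divides its conjugate\<close>
    then have "ztheta (u + v) (- v) \<in> theta_power_associates (Suc m)"
      using primitive_norm_step[OF Suc.IH] Suc.prems by (auto simp: theta_norm_cnj)
    then show ?thesis
      using cnj_theta_power_associates by (fastforce simp: cnj_ztheta)
  qed
qed

fun lucas_u :: "nat \<Rightarrow> int" where
  "lucas_u 0 = 0"
| "lucas_u (Suc 0) = 1"
| "lucas_u (Suc (Suc n)) = lucas_u (Suc n) - 2 * lucas_u n"

lemma theta_power_diff: "theta^n - theta'^n = of_int (lucas_u n) * (theta - theta')"
proof (induction n rule: lucas_u.induct)
  case (3 n)
  have "theta^Suc (Suc n) = theta^n * theta^2" "theta'^Suc (Suc n) = theta'^n * theta'^2"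
    by (simp_all add: power2_eq_square)
  then have "theta^Suc (Suc n) = theta^Suc n - 2 * theta^n"
    "theta'^Suc (Suc n) = theta'^Suc n - 2 * theta'^n"
    by (simp_all add: theta_squared theta'_squared algebra_simps)
  then have "theta^Suc (Suc n) - theta'^Suc (Suc n)
      = (theta^Suc n - theta'^Suc n) - 2 * (theta^n - theta'^n)"
    by (simp add: algebra_simps)
  also have "\<dots> = of_int (lucas_u (Suc n)) * (theta - theta')
      - 2 * (of_int (lucas_u n) * (theta - theta'))"
    by (simp only: 3)
  finally show ?case by (simp add: algebra_simps)
qed simp_all

lemma lucas_u_mod_4: "1 \<le> n \<Longrightarrow> lucas_u (2 * n) mod 4 = 1 \<and> lucas_u (2 * n + 1) mod 4 = 3"
proof (induction n rule: dec_induct)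
  case base
  then show ?case by (simp add: numeral_eq_Suc)
next
  case (step n)
  have even_step: "lucas_u (2 * Suc n) = lucas_u (2 * n + 1) - 2 * lucas_u (2 * n)"
    by (simp flip: Suc_eq_plus1)
  have odd_step: "lucas_u (2 * Suc n + 1) = lucas_u (2 * Suc n) - 2 * lucas_u (2 * n + 1)"
    by (simp flip: Suc_eq_plus1)
  show ?case using step.IH even_step odd_step by presburger
qed

lemma lucas_u_unit_if_associate:
  assumes "ztheta u 1 \<in> theta_power_associates m"
  shows "lucas_u m = 1 \<or> lucas_u m = -1"
proof -
  let ?z = "ztheta u 1"
  have "?z - cnj ?z = theta - theta'"
    by (simp add: ztheta_def cnj_theta theta'_def)
  moreover have "?z - cnj ?z = theta^m - theta'^m \<or> ?z - cnj ?z = - (theta^m - theta'^m)"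
    using assms by (auto simp: theta_power_associates_def cnj_theta cnj_theta')
  ultimately have "1 * (theta - theta') = of_int (lucas_u m) * (theta - theta')
      \<or> - 1 * (theta - theta') = of_int (lucas_u m) * (theta - theta')"
    by (simp only: theta_power_diff mult_1 mult_minus1) (metis minus_equation_iff)
  then have "(1 :: complex) = of_int (lucas_u m) \<or> (- 1 :: complex) = of_int (lucas_u m)"
    using theta_neq_theta' by (simp only: mult_cancel_right) simp
  then show ?thesis
    by (metis of_int_eq_iff of_int_1 of_int_minus)
qed

lemma odd_if_quarter_norm_power_of_two:
  fixes x :: int
  assumes "(x^2 + 7) div 4 = 2^m" and "2 \<le> m"
  shows "odd x"
proof
  assume "even x"
  then obtain y where "x = 2 * y" by blast
  then have "y^2 + 1 = 2^m"
    using assms(1) by (simp add: power2_eq_square)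
  moreover have "(4 :: int) dvd 2^m"
    using le_imp_power_dvd[OF assms(2), of "2 :: int"] by simp
  moreover have "\<not> 4 dvd y^2 + 1"
  proof (cases "even y")
    case True
    then obtain z where "y = 2 * z" by blast
    then have "y^2 + 1 = 4 * z^2 + 1" by (simp add: power2_eq_square)
    then show ?thesis by (simp only:) (simp add: dvd_add_right_iff)
  next
    case False
    then obtain z where "y = 2 * z + 1" by (rule oddE)
    then have "y^2 + 1 = 4 * (z^2 + z) + 2" by (simp add: power2_eq_square algebra_simps)
    then show ?thesis by (simp only:) (simp add: dvd_add_right_iff)
  qed
  ultimately show False by simp
qed

theorem mainTheorem2:
  fixes x :: int and m :: nat
  assumes "odd m" and "m \<ge> 3" and "(x^2 + 7) div 4 = 2^m"
  shows "1 - 2 * theta = theta ^ m - theta' ^ m"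
proof -
  have "odd x"
    by (rule odd_if_quarter_norm_power_of_two[OF assms(3)]) (use assms(2) in linarith)
  then obtain u where x: "x = 2 * u + 1" by (rule oddE)
  have "theta_norm u 1 = 2^m"
    using assms(3) by (simp add: x theta_norm_def power2_eq_square algebra_simps)
  then have "ztheta u 1 \<in> theta_power_associates m"
    using primitive_norm_power_of_two by simp
  then have "lucas_u m = 1 \<or> lucas_u m = -1"
    by (rule lucas_u_unit_if_associate)
  moreover obtain n where m: "m = 2 * n + 1"
    using assms(1) by (rule oddE)
  with assms(2) have "1 \<le> n" by linarith
  ultimately have "lucas_u m = -1"
    using lucas_u_mod_4 m by force
  then show ?thesis
    using theta_power_diff[of m] by (simp add: theta'_def)
qed

end
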